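(* Let $M=P+\varepsilon D\in\mathbb{DH}[t]$ be monic with $\operatorname{mrpf}(P)=1$, and write $P\overline{P}=\prod_{i=1}^m N_i^{n_i}$ with pairwise coprime, irreducible, monic quadratic polynomials $N_1,\dots,N_m\in\mathbb{R}[t]$ and positive integers $n_1,\dots,n_m$. Then $M$ admits a factorization $M=(t-h_1)(t-h_2)\cdots(t-h_k)$ with $h_1,\dots,h_k\in\mathbb{DH}$ if and only if $\prod_{i=1}^m N_i^{n_i-1}$ divides the norm polynomial $M\overline{M}$ in $\mathbb{D}[t]$ (equivalently, $\prod_{i=1}^m N_i^{n_i-1}$ divides the dual part $P\overline{D}+D\overline{P}$ of $M\overline{M}$ in $\mathbb{R}[t]$).
   Context: $\mathbb{D}=\mathbb{R}[\varepsilon]/\langle\varepsilon^2\rangle$ denotes the dual numbers. $\mathbb{H}$ denotes the real quaternions with basis $1,\mathbf{i},\mathbf{j},\mathbf{k}$, $\mathbf{i}^2=\mathbf{j}^2=\mathbf{k}^2=\mathbf{i}\mathbf{j}\mathbf{k}=-1$. The dual quaternions $\mathbb{DH}$ are the $\mathbb{D}$-algebra $\mathbb{H}\otimes_{\mathbb{R}}\mathbb{D}$ ($\varepsilon$ commutes with $\mathbf{i},\mathbf{j},\mathbf{k}$). The conjugate of $q=q_0+q_1\mathbf{i}+q_2\mathbf{j}+q_3\mathbf{k}$ ($q_i\in\mathbb{D}$) is $\overline{q}=q_0-q_1\mathbf{i}-q_2\mathbf{j}-q_3\mathbf{k}$. $\mathbb{DH}[t]$ is the ring of polynomials with dual quaternion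 coefficients in which $t$ commutes with all coefficients. For $M=\sum m_it^i$, $\overline{M}=\sum\overline{m_i}t^i$ and the norm polynomial is $M\overline{M}=\overline{M}M\in\mathbb{D}[t]$. Every $M\in\mathbb{DH}[t]$ is written $M=P+\varepsilon D$ with $P,D\in\mathbb{H}[t]$ (primal and dual part); then $M\overline{M}=P\overline{P}+\varepsilon(P\overline{D}+D\overline{P})$. For $P\in\mathbb{H}[t]$, $\operatorname{mrpf}(P)$ denotes the maximal (monic) real polynomial factor of $P$, i.e. the monic $c\in\mathbb{R}[t]$ of largest degree with $P=cP'$ for some $P'\in\mathbb{H}[t]$; $\operatorname{mrpf}(P)=1$ means $P$ has no real polynomial factor of positive degree. *)

theory Defs
  imports "HOL-Computational_Algebra.Polynomial"
begin

text \<open>Real quaternions q0 + q1 i + q2 j + q3 k and dual quaternions p + eps d.\<close>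
datatype quat = Quat real real real real
datatype dquat = DQuat quat quat

text \<open>Quaternion polynomials in H[t], represented by their four real component
  polynomials p0 + p1 i + p2 j + p3 k (t is central, so this is exact).\<close>
datatype hpoly = HP "real poly" "real poly" "real poly" "real poly"

text \<open>Dual quaternion polynomials M = P + eps D in DH[t].\<close>
datatype dhpoly = DHP hpoly hpoly

fun hp_add :: "hpoly \<Rightarrow> hpoly \<Rightarrow> hpoly" where
  "hp_add (HP a0 a1 a2 a3) (HP b0 b1 b2 b3) = HP (a0+b0) (a1+b1) (a2+b2) (a3+b3)"

fun hp_mult :: "hpoly \<Rightarrow> hpoly \<Rightarrow> hpoly" where
  "hp_mult (HP a0 a1 a2 a3) (HP b0 b1 b2 b3) =
     HP (a0*b0 - a1*b1 - a2*b2 - a3*b3)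
        (a0*b1 + a1*b0 + a2*b3 - a3*b2)
        (a0*b2 - a1*b3 + a2*b0 + a3*b1)
        (a0*b3 + a1*b2 - a2*b1 + a3*b0)"

fun hp_cnj :: "hpoly \<Rightarrow> hpoly" where
  "hp_cnj (HP a0 a1 a2 a3) = HP a0 (-a1) (-a2) (-a3)"

definition hp_of_real :: "real poly \<Rightarrow> hpoly" where
  "hp_of_real c = HP c 0 0 0"

definition hp_zero :: hpoly where "hp_zero = HP 0 0 0 0"
definition hp_one :: hpoly where "hp_one = HP 1 0 0 0"

fun dhp_mult :: "dhpoly \<Rightarrow> dhpoly \<Rightarrow> dhpoly" where
  "dhp_mult (DHP P D) (DHP P' D') = DHP (hp_mult P P') (hp_add (hp_mult P D') (hp_mult D P'))"

fun dhp_cnj :: "dhpoly \<Rightarrow> dhpoly" where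
  "dhp_cnj (DHP P D) = DHP (hp_cnj P) (hp_cnj D)"

definition dhp_one :: dhpoly where "dhp_one = DHP hp_one hp_zero"

definition dhp_of_dual :: "real poly \<Rightarrow> real poly \<Rightarrow> dhpoly" where
  "dhp_of_dual a b = DHP (hp_of_real a) (hp_of_real b)"

text \<open>The linear polynomial t - h for a dual quaternion h.\<close>
fun lin_factor :: "dquat \<Rightarrow> dhpoly" where
  "lin_factor (DQuat (Quat a0 a1 a2 a3) (Quat b0 b1 b2 b3)) =
     DHP (HP [:-a0, 1:] [:-a1:] [:-a2:] [:-a3:]) (HP [:-b0:] [:-b1:] [:-b2:] [:-b3:])"

definition lin_prod :: "dquat list \<Rightarrow> dhpoly" where
  "lin_prod hs = foldr (\<lambda>h acc. dhp_mult (lin_factor h) acc) hs dhp_one"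

fun dhp_degree :: "dhpoly \<Rightarrow> nat" where
  "dhp_degree (DHP (HP p0 p1 p2 p3) (HP d0 d1 d2 d3)) =
     Max {degree p0, degree p1, degree p2, degree p3, degree d0, degree d1, degree d2, degree d3}"

fun dhp_coeff :: "dhpoly \<Rightarrow> nat \<Rightarrow> dquat" where
  "dhp_coeff (DHP (HP p0 p1 p2 p3) (HP d0 d1 d2 d3)) n =
     DQuat (Quat (coeff p0 n) (coeff p1 n) (coeff p2 n) (coeff p3 n))
           (Quat (coeff d0 n) (coeff d1 n) (coeff d2 n) (coeff d3 n))"

definition dhp_monic :: "dhpoly \<Rightarrow> bool" where
  "dhp_monic M \<longleftrightarrow> dhp_coeff M (dhp_degree M) = DQuat (Quat 1 0 0 0) (Quat 0 0 0 0)"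

fun hp_scale :: "real poly \<Rightarrow> hpoly \<Rightarrow> hpoly" where
  "hp_scale c (HP a0 a1 a2 a3) = HP (c*a0) (c*a1) (c*a2) (c*a3)"

text \<open>mrpf(P) = 1: P has no real polynomial factor of positive degree.\<close>
definition mrpf_one :: "hpoly \<Rightarrow> bool" where
  "mrpf_one P \<longleftrightarrow> \<not> (\<exists>c P'. degree c > 0 \<and> P = hp_scale c P')"

end

(*
  Write P + eps D with P, D quaternions over R[t]; the dual part of the norm of P + eps D is
  2 <P, D>, where <_, _> is the quaternion inner product.  For a linear polynomial L of norm N
  and any real quaternion c,

    <P' L, P' c + D' L> = <P', D'> N + |P'|^2 <L, c>,

  and since the square of a prime q of degree at least 2 does not divide the quadratic N, the
  condition "q^(k+1) | |P|^2 implies q^k | <P, D>, for all such q and k" holds for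
  P' L + eps (P' c + D' L) if and only if it holds for P' + eps D'.  So it holds for every
  product of linear factors, and when |P|^2 is the product of the N_i^n_i it amounts to the
  product of the N_i^(n_i - 1) dividing <P, D>.

  Conversely, assume the condition and pick a prime factor N of |P|^2.  Evaluating at a complex
  root l of N, Niven's lemma gives P = P' L with |L|^2 = N, because P has no real factor.
  Writing D = P' c + D' L amounts to finding beta with (D(l) + P'(l) beta) conj(L(l)) = 0 in the
  complex quaternions; this is solvable unless N divides |P'|^2 but not <P, D>, which the
  condition for q = N, k = 1 excludes.  The condition passes to P' + eps D', and induction on
  the degree finishes the proof.
*)

theory Submission
  imports Defs "HOL-Computational_Algebra.Polynomial_Factorial"
    "HOL-Computational_Algebra.Field_as_Ring"
begin

section \<open>Quaternions over a commutative ring\<close>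

datatype 'a quaternion = Qn 'a 'a 'a 'a

instantiation quaternion :: (comm_ring_1) ring_1
begin

definition "0 = Qn 0 0 0 0"
definition "1 = Qn 1 0 0 0"

fun plus_quaternion where
  "Qn a0 a1 a2 a3 + Qn b0 b1 b2 b3 = Qn (a0 + b0) (a1 + b1) (a2 + b2) (a3 + b3)"

fun uminus_quaternion where
  "- Qn a0 a1 a2 a3 = Qn (- a0) (- a1) (- a2) (- a3)"

definition minus_quaternion :: "'a quaternion \<Rightarrow> 'a quaternion \<Rightarrow> 'a quaternion" where
  "minus_quaternion x y = x + - y"

fun times_quaternion where
  "Qn a0 a1 a2 a3 * Qn b0 b1 b2 b3 =
     Qn (a0 * b0 - a1 * b1 - a2 * b2 - a3 * b3)
        (a0 * b1 + a1 * b0 + a2 * b3 - a3 * b2)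
        (a0 * b2 - a1 * b3 + a2 * b0 + a3 * b1)
        (a0 * b3 + a1 * b2 - a2 * b1 + a3 * b0)"

instance
proof
  fix x y z :: "'a quaternion"
  show "x * y * z = x * (y * z)" "(x + y) * z = x * z + y * z" "x * (y + z) = x * y + x * z"
    "x + y + z = x + (y + z)" "x + y = y + x"
    by (cases x; cases y; cases z; simp add: algebra_simps)+
  show "0 + x = x" "- x + x = 0" "1 * x = x" "x * 1 = x"
    by (cases x; simp add: zero_quaternion_def one_quaternion_def)+
  show "x - y = x + - y" by (fact minus_quaternion_def)
  show "(0::'a quaternion) \<noteq> 1" by (simp add: zero_quaternion_def one_quaternion_def)
qed

end

lemma Qn_diff: "Qn a0 a1 a2 a3 - Qn b0 b1 b2 b3 = Qn (a0 - b0) (a1 - b1) (a2 - b2) (a3 - b3)"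
  for a0 :: "'a::comm_ring_1"
  by (simp add: minus_quaternion_def)

lemma Qn_eq_0_iff [simp]: "Qn a b c d = 0 \<longleftrightarrow> a = 0 \<and> b = 0 \<and> c = 0 \<and> d = 0"
  by (simp add: zero_quaternion_def)

fun qcnj :: "'a::comm_ring_1 quaternion \<Rightarrow> 'a quaternion" where
  "qcnj (Qn a b c d) = Qn a (- b) (- c) (- d)"

fun qnorm :: "'a::comm_ring_1 quaternion \<Rightarrow> 'a" where
  "qnorm (Qn a b c d) = a * a + b * b + c * c + d * d"

fun qinner :: "'a::comm_ring_1 quaternion \<Rightarrow> 'a quaternion \<Rightarrow> 'a" where
  "qinner (Qn a0 a1 a2 a3) (Qn b0 b1 b2 b3) = a0 * b0 + a1 * b1 + a2 * b2 + a3 * b3"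

fun qre :: "'a quaternion \<Rightarrow> 'a" where
  "qre (Qn a _ _ _) = a"

definition qscalar :: "'a::comm_ring_1 \<Rightarrow> 'a quaternion" where
  "qscalar c = Qn c 0 0 0"

fun qmap :: "('a \<Rightarrow> 'b) \<Rightarrow> 'a quaternion \<Rightarrow> 'b quaternion" where
  "qmap f (Qn a b c d) = Qn (f a) (f b) (f c) (f d)"

lemma qcnj_times: "qcnj (x * y) = qcnj y * qcnj x"
  by (cases x; cases y) (simp add: algebra_simps)

lemma qcnj_diff: "qcnj (x - y) = qcnj x - qcnj y"
  by (cases x; cases y) (simp add: Qn_diff)

lemma qcnj_qcnj [simp]: "qcnj (qcnj x) = x"
  by (cases x) simp

lemma times_qcnj_self: "x * qcnj x = qscalar (qnorm x)"
  by (cases x) (simp add: qscalar_def algebra_simps)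

lemma qcnj_times_self: "qcnj x * x = qscalar (qnorm x)"
  by (cases x) (simp add: qscalar_def algebra_simps)

lemma qscalar_commute: "qscalar c * x = x * qscalar c"
  by (cases x) (simp add: qscalar_def algebra_simps)

lemma polarization: "x * qcnj w + w * qcnj x = qscalar (2 * qinner x w)"
  by (cases x; cases w) (simp add: qscalar_def algebra_simps)

lemma qre_times_qcnj: "qre (x * qcnj w) = qinner x w"
  by (cases x; cases w) (simp add: algebra_simps)

lemma qinner_qcnj_left: "qinner (qcnj x) w = qre (x * w)"
  by (cases x; cases w) (simp add: algebra_simps)

lemma qinner_commute: "qinner x w = qinner w x"
  by (cases x; cases w) (simp add: algebra_simps)

lemma qnorm_times: "qnorm (x * y) = qnorm x * qnorm y"
  by (cases x; cases y) (simp add: algebra_simps)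

lemma qnorm_add: "qnorm (x + y) = qnorm x + qnorm y + 2 * qinner x y"
  by (cases x; cases y) (simp add: algebra_simps)

lemma qnorm_qcnj: "qnorm (qcnj x) = qnorm x"
  by (cases x) simp

text \<open>\<open>2 * qinner P D\<close> is the dual part of the norm of \<open>P + \<epsilon> D\<close>;
  this is its product rule.\<close>
lemma qinner_times_dual:
  "qinner (X * Y) (X * D2 + D1 * Y) = qinner X D1 * qnorm Y + qnorm X * qinner Y D2"
  by (cases X; cases Y; cases D1; cases D2) (simp add: algebra_simps)

lemma qscalar_times: "qscalar a * qscalar b = qscalar (a * b)"
  by (simp add: qscalar_def)

lemma qscalar_0 [simp]: "qscalar 0 = 0" and qscalar_1 [simp]: "qscalar 1 = 1"
  by (simp_all add: qscalar_def one_quaternion_def)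

lemma qscalar_add: "qscalar (a + b) = qscalar a + qscalar b"
  by (simp add: qscalar_def)

lemma qscalar_diff: "qscalar (a - b) = qscalar a - qscalar b"
  by (simp add: qscalar_def Qn_diff)

lemma qscalar_minus: "qscalar (- a) = - qscalar a"
  by (simp add: qscalar_def)

lemma qscalar_eq_0_iff [simp]: "qscalar a = 0 \<longleftrightarrow> a = 0"
  by (simp add: qscalar_def)

lemma qscalar_inject [simp]: "qscalar a = qscalar b \<longleftrightarrow> a = b"
  by (simp add: qscalar_def)

lemma qcnj_qscalar [simp]: "qcnj (qscalar c) = qscalar c"
  by (simp add: qscalar_def)

lemma qscalar_times_Qn: "qscalar c * Qn a b d e = Qn (c * a) (c * b) (c * d) (c * e)"
  by (simp add: qscalar_def)

lemma qnorm_qscalar: "qnorm (qscalar c) = c * c"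
  by (simp add: qscalar_def)

lemma qnorm_qscalar_times: "qnorm (qscalar c * x) = c * c * qnorm x"
  by (cases x) (simp add: qscalar_def algebra_simps)

lemma qinner_qscalar_times: "qinner y (qscalar c * x) = c * qinner y x"
  by (cases x; cases y) (simp add: qscalar_def algebra_simps)

lemma qre_qscalar_times: "qre (qscalar c * x) = c * qre x"
  by (cases x) (simp add: qscalar_def)

lemma qscalar_times_eq_0:
  fixes c :: "'a::idom"
  assumes "c \<noteq> 0" and "qscalar c * x = 0"
  shows "x = 0"
  using assms by (cases x) (simp add: qscalar_def)

lemma qnorm_eq_0_real: "qnorm (x :: real quaternion) = 0 \<Longrightarrow> x = 0"
  by (cases x) (simp add: add_nonneg_eq_0_iff)

section \<open>Quaternion polynomials\<close>

text \<open>Elements of \<open>\<bbbH>[t]\<close> are quaternions over \<open>\<real>[t]\<close>, since \<open>t\<close> is central.\<close>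

fun hp_quat :: "hpoly \<Rightarrow> real poly quaternion" where
  "hp_quat (HP a b c d) = Qn a b c d"

fun quat_hp :: "real poly quaternion \<Rightarrow> hpoly" where
  "quat_hp (Qn a b c d) = HP a b c d"

lemma quat_hp_hp_quat [simp]: "quat_hp (hp_quat X) = X"
  by (cases X) simp

lemma hp_quat_quat_hp [simp]: "hp_quat (quat_hp X) = X"
  by (cases X) simp

lemma hp_quat_inject: "hp_quat X = hp_quat Y \<longleftrightarrow> X = Y"
  by (metis quat_hp_hp_quat)

lemma hp_quat_mult: "hp_quat (hp_mult X Y) = hp_quat X * hp_quat Y"
  by (cases X; cases Y) simp

lemma hp_quat_add: "hp_quat (hp_add X Y) = hp_quat X + hp_quat Y"
  by (cases X; cases Y) simp

lemma hp_quat_cnj: "hp_quat (hp_cnj X) = qcnj (hp_quat X)"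
  by (cases X) simp

lemma hp_quat_of_real: "hp_quat (hp_of_real c) = qscalar c"
  by (simp add: hp_of_real_def qscalar_def)

lemma hp_quat_scale: "hp_quat (hp_scale c X) = qscalar c * hp_quat X"
  by (cases X) (simp add: qscalar_def)

definition qvar :: "real poly quaternion" where
  "qvar = qscalar [:0, 1:]"

definition qconst :: "real quaternion \<Rightarrow> real poly quaternion" where
  "qconst = qmap (\<lambda>a. [:a:])"

lemma qconst_times: "qconst (x * y) = qconst x * qconst y"
  by (cases x; cases y) (simp add: qconst_def)

lemma qconst_qcnj: "qconst (qcnj x) = qcnj (qconst x)"
  by (cases x) (simp add: qconst_def)

lemma qconst_qscalar: "qconst (qscalar a) = qscalar [:a:]"
  by (simp add: qconst_def qscalar_def)

lemma times_qcnj_linear: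
  "(qvar - qconst p) * qcnj (qvar - qconst p) = qscalar [:qnorm p, - 2 * qre p, 1:]"
proof -
  have commute: "qconst p * qvar = qvar * qconst p" by (simp add: qvar_def qscalar_commute)
  have sum: "qconst p + qconst (qcnj p) = qscalar [:2 * qre p:]"
    by (cases p) (simp add: qconst_def qscalar_def)
  have "(qvar - qconst p) * qcnj (qvar - qconst p) = (qvar - qconst p) * (qvar - qconst (qcnj p))"
    by (simp only: qcnj_diff qconst_qcnj qvar_def qcnj_qscalar)
  also have "\<dots> = qvar * qvar - qvar * (qconst p + qconst (qcnj p)) + qconst p * qconst (qcnj p)"
    by (simp add: algebra_simps commute)
  also have "\<dots> = qscalar ([:0, 1:] * [:0, 1:] - [:0, 1:] * [:2 * qre p:] + [:qnorm p:])"
    by (simp add: sum qvar_def qscalar_times times_qcnj_self qconst_qscalar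
        flip: qconst_times qscalar_diff qscalar_add)
  also have "[:0, 1:] * [:0, 1:] - [:0, 1:] * [:2 * qre p:] + [:qnorm p:] = [:qnorm p, - 2 * qre p, 1:]"
    by simp
  finally show ?thesis .
qed

lemma qnorm_linear: "qnorm (qvar - qconst p) = [:qnorm p, - 2 * qre p, 1:]"
  using times_qcnj_linear[of p] by (simp add: times_qcnj_self)

section \<open>Evaluation at a complex number\<close>

definition ceval :: "complex \<Rightarrow> real poly \<Rightarrow> complex" where
  "ceval l f = poly (map_poly complex_of_real f) l"

lemma ceval_0 [simp]: "ceval l 0 = 0" and ceval_1 [simp]: "ceval l 1 = 1"
  by (simp_all add: ceval_def)

lemma ceval_pCons [simp]: "ceval l (pCons a p) = of_real a + l * ceval l p"
  by (simp add: ceval_def map_poly_pCons)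

lemma ceval_add [simp]: "ceval l (p + q) = ceval l p + ceval l q"
proof -
  have "map_poly complex_of_real (p + q) = map_poly of_real p + map_poly of_real q"
    by (rule poly_eqI) (simp add: coeff_map_poly)
  then show ?thesis by (simp add: ceval_def)
qed

lemma ceval_uminus [simp]: "ceval l (- p) = - ceval l p"
proof -
  have "map_poly complex_of_real (- p) = - map_poly of_real p"
    by (rule poly_eqI) (simp add: coeff_map_poly)
  then show ?thesis by (simp add: ceval_def)
qed

lemma ceval_diff [simp]: "ceval l (p - q) = ceval l p - ceval l q"
  using ceval_add[of l p "- q"] by simp

lemma ceval_mult [simp]: "ceval l (p * q) = ceval l p * ceval l q"
proof (induction p rule: pCons_induct)
  case (pCons a p)
  have "map_poly complex_of_real (smult a q) = smult (of_real a) (map_poly of_real q)"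
    by (rule poly_eqI) (simp add: coeff_map_poly)
  then have "ceval l (smult a q) = of_real a * ceval l q" by (simp add: ceval_def)
  with pCons.IH show ?case by (simp add: algebra_simps)
qed simp

definition qeval :: "complex \<Rightarrow> real poly quaternion \<Rightarrow> complex quaternion" where
  "qeval l = qmap (ceval l)"

lemma qeval_times: "qeval l (X * Y) = qeval l X * qeval l Y"
  by (cases X; cases Y) (simp add: qeval_def)

lemma qeval_add: "qeval l (X + Y) = qeval l X + qeval l Y"
  by (cases X; cases Y) (simp add: qeval_def)

lemma qeval_diff: "qeval l (X - Y) = qeval l X - qeval l Y"
  by (cases X; cases Y) (simp add: qeval_def Qn_diff)

lemma qeval_qcnj: "qeval l (qcnj X) = qcnj (qeval l X)"
  by (cases X) (simp add: qeval_def)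

lemma qeval_qscalar: "qeval l (qscalar c) = qscalar (ceval l c)"
  by (simp add: qeval_def qscalar_def)

lemma qeval_qconst: "qeval l (qconst x) = qmap complex_of_real x"
  by (cases x) (simp add: qeval_def qconst_def)

lemma qeval_qvar: "qeval l qvar = qscalar l"
  by (simp add: qvar_def qeval_qscalar)

lemma qnorm_qeval: "qnorm (qeval l X) = ceval l (qnorm X)"
  by (cases X) (simp add: qeval_def)

lemma qinner_qeval: "qinner (qeval l X) (qeval l Y) = ceval l (qinner X Y)"
  by (cases X; cases Y) (simp add: qeval_def)

lemma qmap_of_real_times: "qmap complex_of_real (x * y) = qmap of_real x * qmap of_real y"
  by (cases x; cases y) simp

lemma qmap_of_real_add: "qmap complex_of_real (x + y) = qmap of_real x + qmap of_real y"
  by (cases x; cases y) simp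

lemma qmap_of_real_minus: "qmap complex_of_real (- x) = - qmap of_real x"
  by (cases x) simp

lemma qnorm_qmap_of_real: "qnorm (qmap complex_of_real x) = of_real (qnorm x)"
  by (cases x) simp

lemma qinner_qmap_of_real:
  "qinner (qmap complex_of_real x) (qmap complex_of_real y) = of_real (qinner x y)"
  by (cases x; cases y) simp

lemma of_real_add_of_real_times_eq_0:
  assumes "Im l \<noteq> 0" and "complex_of_real u + complex_of_real v * l = 0"
  shows "u = 0 \<and> v = 0"
proof -
  have "v * Im l = 0" using arg_cong[OF assms(2), of Im] by simp
  with assms show ?thesis by simp
qed

lemma complex_real_coordinates:
  assumes "Im l \<noteq> 0"
  obtains x y :: real where "z = of_real x + of_real y * l"
proof
  show "z = of_real (Re z - Im z / Im l * Re l) + of_real (Im z / Im l) * l"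
    using assms by (simp add: complex_eq_iff)
qed

lemma quaternion_real_coordinates:
  assumes "Im l \<noteq> 0"
  obtains B0 B1 where "\<beta> = qmap complex_of_real B0 + qscalar l * qmap complex_of_real B1"
proof (cases \<beta>)
  case (Qn z0 z1 z2 z3)
  obtain x0 y0 where 0: "z0 = of_real x0 + of_real y0 * l" using complex_real_coordinates[OF assms] .
  obtain x1 y1 where 1: "z1 = of_real x1 + of_real y1 * l" using complex_real_coordinates[OF assms] .
  obtain x2 y2 where 2: "z2 = of_real x2 + of_real y2 * l" using complex_real_coordinates[OF assms] .
  obtain x3 y3 where 3: "z3 = of_real x3 + of_real y3 * l" using complex_real_coordinates[OF assms] .
  show ?thesis
    by (rule that[of "Qn x0 x1 x2 x3" "Qn y0 y1 y2 y3"])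
      (simp add: Qn 0 1 2 3 qscalar_times_Qn mult.commute)
qed

section \<open>Irreducible quadratic factors and Niven's lemma\<close>

lemma mod_quadratic_linear:
  fixes N f :: "real poly"
  assumes "degree N = 2"
  obtains q x y where "f = q * N + [:x, y:]"
proof -
  define r where "r = f mod N"
  have "N \<noteq> 0" using assms by auto
  have "degree r \<le> 1"
  proof (cases "r = 0")
    case False
    then show ?thesis using degree_mod_less[OF \<open>N \<noteq> 0\<close>, of f] assms by (simp add: r_def)
  qed simp
  then have "r = [:coeff r 0, coeff r 1:]"
    by (intro poly_eqI) (auto simp: coeff_pCons coeff_eq_0 split: nat.split)
  moreover have "f = (f div N) * N + r" by (simp add: r_def)
  ultimately show ?thesis using that by metis
qed

lemma monic_quadratic_eq:
  fixes N :: "real poly"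
  assumes "degree N = 2" and "lead_coeff N = 1"
  shows "N = [:coeff N 0, coeff N 1, 1:]"
  using assms by (intro poly_eqI) (auto simp: coeff_pCons coeff_eq_0 numeral_2_eq_2 split: nat.split)

lemma irreducible_quadratic_discriminant:
  fixes c b :: real
  assumes "irreducible [:c, b, 1:]"
  shows "b\<^sup>2 - 4 * c < 0"
proof (rule ccontr)
  assume "\<not> b\<^sup>2 - 4 * c < 0"
  then have s: "(sqrt (b\<^sup>2 - 4 * c))\<^sup>2 = b\<^sup>2 - 4 * c" by simp
  define x where "x = (- b + sqrt (b\<^sup>2 - 4 * c)) / 2"
  have "poly [:c, b, 1:] x = 0"
    using s by (simp add: x_def algebra_simps power2_eq_square field_simps)
  then have "[:- x, 1:] dvd [:c, b, 1:]" by (simp only: poly_eq_0_iff_dvd)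
  then obtain q where q: "[:c, b, 1:] = [:- x, 1:] * q" ..
  then have "q \<noteq> 0" by auto
  then have "degree [:c, b, 1:] = 1 + degree q"
    unfolding q by (subst degree_mult_eq) auto
  then have "degree q = 1" by simp
  then show False
    using irreducibleD[OF assms q] \<open>q \<noteq> 0\<close> by (auto simp: is_unit_iff_degree)
qed

text \<open>The complex root \<open>l\<close> of an irreducible quadratic \<open>N\<close> identifies \<open>\<real>[t]/(N)\<close>
  with \<open>\<complex>\<close>.\<close>

lemma irreducible_quadratic_root:
  fixes N :: "real poly"
  assumes irr: "irreducible N" and deg: "degree N = 2" and monic: "lead_coeff N = 1"
  obtains l where "Im l \<noteq> 0" and "\<And>f. ceval l f = 0 \<longleftrightarrow> N dvd f"
proof -
  define c b where "c = coeff N 0" and "b = coeff N 1"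
  have N: "N = [:c, b, 1:]" using monic_quadratic_eq[OF deg monic] by (simp add: c_def b_def)
  have disc: "b\<^sup>2 - 4 * c < 0" using irr irreducible_quadratic_discriminant by (simp add: N)
  define y where "y = sqrt (4 * c - b\<^sup>2) / 2"
  have y: "y > 0" "y * y = c - b\<^sup>2 / 4"
    using disc by (simp_all add: y_def field_simps flip: power2_eq_square)
  define l where "l = Complex (- b / 2) y"
  have "Im l \<noteq> 0" using y by (simp add: l_def)
  have Nl: "ceval l N = 0"
    using y by (simp add: N l_def complex_eq_iff power2_eq_square algebra_simps)
  have "ceval l f = 0 \<longleftrightarrow> N dvd f" for f
  proof
    assume "ceval l f = 0"
    obtain q x z where f: "f = q * N + [:x, z:]" using mod_quadratic_linear[OF deg] .
    with \<open>ceval l f = 0\<close> Nl have "of_real x + of_real z * l = 0" by (simp add: mult.commute)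
    then have "x = 0" "z = 0" using of_real_add_of_real_times_eq_0[OF \<open>Im l \<noteq> 0\<close>] by blast+
    then show "N dvd f" by (simp add: f)
  qed (auto simp: Nl)
  with \<open>Im l \<noteq> 0\<close> show ?thesis using that by blast
qed

definition qscalar_dvd :: "real poly \<Rightarrow> real poly quaternion \<Rightarrow> bool" where
  "qscalar_dvd N X \<longleftrightarrow> (\<exists>S. X = qscalar N * S)"

lemma qscalar_dvd_times_right: "qscalar_dvd c P \<Longrightarrow> qscalar_dvd c (P * X)"
  unfolding qscalar_dvd_def by (metis mult.assoc)

lemma qscalar_dvd_Qn_iff:
  "qscalar_dvd N (Qn a b c d) \<longleftrightarrow> N dvd a \<and> N dvd b \<and> N dvd c \<and> N dvd d"
proof
  assume "qscalar_dvd N (Qn a b c d)"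
  then obtain S where "Qn a b c d = qscalar N * S" by (auto simp: qscalar_dvd_def)
  then show "N dvd a \<and> N dvd b \<and> N dvd c \<and> N dvd d" by (cases S) (auto simp: qscalar_times_Qn)
next
  assume "N dvd a \<and> N dvd b \<and> N dvd c \<and> N dvd d"
  then obtain a' b' c' d' where "a = N * a'" "b = N * b'" "c = N * c'" "d = N * d'"
    by (auto elim!: dvdE)
  then show "qscalar_dvd N (Qn a b c d)"
    unfolding qscalar_dvd_def by (intro exI[of _ "Qn a' b' c' d'"]) (simp add: qscalar_times_Qn)
qed

lemma qscalar_dvd_if_qeval_eq_0:
  assumes "\<And>f. ceval l f = 0 \<longleftrightarrow> N dvd f" and "qeval l X = 0"
  shows "qscalar_dvd N X"
  using assms by (cases X) (simp add: qeval_def qscalar_dvd_Qn_iff)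

lemma right_divisor_if_qeval:
  assumes root: "\<And>f. ceval l f = 0 \<longleftrightarrow> N dvd f" and "N \<noteq> 0"
    and L: "L * qcnj L = qscalar N"
    and F: "qeval l F * qeval l (qcnj L) = 0"
  obtains G where "F = G * L"
proof -
  have "qscalar_dvd N (F * qcnj L)"
    using F by (intro qscalar_dvd_if_qeval_eq_0[OF root]) (simp add: qeval_times)
  then obtain G where G: "F * qcnj L = qscalar N * G" by (auto simp: qscalar_dvd_def)
  have "qscalar N * F = F * qcnj L * L"
    using L by (simp add: mult.assoc qcnj_times_self times_qcnj_self qscalar_commute)
  also have "\<dots> = qscalar N * (G * L)" by (simp add: G mult.assoc)
  finally have "qscalar N * (F - G * L) = 0" by (simp add: right_diff_distrib)
  then have "F = G * L" using \<open>N \<noteq> 0\<close> qscalar_times_eq_0 by fastforce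
  then show ?thesis by (rule that)
qed

lemma solve_quaternion_linear:
  fixes A C :: "real quaternion"
  assumes A: "qnorm A \<noteq> 0" and norm: "qnorm C = c * qnorm A"
    and inner: "2 * qinner C A = b * qnorm A"
  obtains p where "A * p = - C" and "qnorm p = c" and "2 * qre p = - b"
proof -
  define p where "p = qscalar (- 1 / qnorm A) * (qcnj A * C)"
  have "A * p = qscalar (- 1 / qnorm A) * ((A * qcnj A) * C)"
    by (simp add: p_def mult.assoc qscalar_commute[of _ A] flip: mult.assoc)
  also have "\<dots> = - C"
    using A by (simp add: times_qcnj_self qscalar_times qscalar_minus flip: mult.assoc)
  finally have "A * p = - C" .
  moreover have "qnorm p = c"
    using A by (simp add: p_def qnorm_times qnorm_qscalar qnorm_qcnj norm field_simps)
  moreover have "qre (qcnj A * C) = qinner C A"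
    using qinner_qcnj_left[of "qcnj A" C] by (simp add: qinner_commute)
  then have "2 * qre p = - b"
    using A inner by (simp add: p_def qre_qscalar_times field_simps)
  ultimately show ?thesis by (rule that)
qed

text \<open>Niven's lemma.  The linear factor is read off from \<open>P(l) = C + l A\<close>, a zero divisor
  in the complex quaternions.\<close>

lemma niven_linear_right_factor:
  fixes N :: "real poly" and P :: "real poly quaternion"
  assumes root: "\<And>f. ceval l f = 0 \<longleftrightarrow> N dvd f" and "Im l \<noteq> 0"
    and N: "N = [:c, b, 1:]" and "N dvd qnorm P" and "\<not> qscalar_dvd N P"
  obtains p P' where "P = P' * (qvar - qconst p)" and "qnorm (qvar - qconst p) = N"
proof -
  have degN: "degree N = 2" using N by simp
  have Nl: "ceval l N = 0" using root by simp
  obtain f0 f1 f2 f3 where P: "P = Qn f0 f1 f2 f3" by (cases P)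
  obtain q0 x0 y0 where 0: "f0 = q0 * N + [:x0, y0:]" using mod_quadratic_linear[OF degN] .
  obtain q1 x1 y1 where 1: "f1 = q1 * N + [:x1, y1:]" using mod_quadratic_linear[OF degN] .
  obtain q2 x2 y2 where 2: "f2 = q2 * N + [:x2, y2:]" using mod_quadratic_linear[OF degN] .
  obtain q3 x3 y3 where 3: "f3 = q3 * N + [:x3, y3:]" using mod_quadratic_linear[OF degN] .
  define A C where "A = Qn y0 y1 y2 y3" and "C = Qn x0 x1 x2 x3"
  have PA: "qeval l P = qmap of_real C + qscalar l * qmap of_real A"
    by (simp add: P 0 1 2 3 qeval_def Nl A_def C_def qscalar_def mult.commute)
  have "qnorm (qeval l P) = 0" using \<open>N dvd qnorm P\<close> root by (simp add: qnorm_qeval)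
  then have "of_real (qnorm C) + l * l * of_real (qnorm A) + 2 * l * of_real (qinner C A) = 0"
    by (simp add: PA qnorm_add qnorm_qscalar_times qinner_qscalar_times qnorm_qmap_of_real
        qinner_qmap_of_real mult.assoc)
  moreover have "l * l = - of_real c - of_real b * l"
    using Nl by (simp add: N algebra_simps eq_neg_iff_add_eq_0)
  ultimately have "of_real (qnorm C - c * qnorm A) + of_real (2 * qinner C A - b * qnorm A) * l = 0"
    by (simp add: algebra_simps)
  from of_real_add_of_real_times_eq_0[OF \<open>Im l \<noteq> 0\<close> this]
  have norm: "qnorm C = c * qnorm A" and inner: "2 * qinner C A = b * qnorm A" by simp_all
  have "qnorm A \<noteq> 0"
  proof
    assume "qnorm A = 0"
    then have "A = 0" "C = 0" using norm qnorm_eq_0_real by auto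
    then have "qscalar_dvd N P" by (simp add: A_def C_def P 0 1 2 3 qscalar_dvd_Qn_iff)
    with \<open>\<not> qscalar_dvd N P\<close> show False by simp
  qed
  then obtain p where Ap: "A * p = - C" and "qnorm p = c" and "2 * qre p = - b"
    using norm inner by (rule solve_quaternion_linear)
  then have L: "qnorm (qvar - qconst p) = N" by (simp add: qnorm_linear N)
  have "qmap of_real C = - (qmap of_real A * qmap complex_of_real p)"
    by (simp add: Ap qmap_of_real_minus flip: qmap_of_real_times)
  then have "qeval l P = qmap of_real A * qeval l (qvar - qconst p)"
    by (simp add: PA qeval_diff qeval_qvar qeval_qconst right_diff_distrib qscalar_commute)
  then have "qeval l P * qeval l (qcnj (qvar - qconst p))
      = qmap of_real A * qeval l ((qvar - qconst p) * qcnj (qvar - qconst p))"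
    by (simp add: qeval_times mult.assoc)
  also have "\<dots> = 0" by (simp add: times_qcnj_self L qeval_qscalar Nl)
  finally have "qeval l P * qeval l (qcnj (qvar - qconst p)) = 0" .
  moreover have "(qvar - qconst p) * qcnj (qvar - qconst p) = qscalar N"
    using L by (simp add: times_qcnj_self)
  moreover have "N \<noteq> 0" using degN by auto
  ultimately obtain P' where "P = P' * (qvar - qconst p)"
    using right_divisor_if_qeval[OF root] by blast
  then show ?thesis using L by (rule that)
qed

section \<open>Lifting the dual part\<close>

lemma qinner_qmap_cnj_self_neq_0:
  fixes x :: "complex quaternion"
  assumes "x \<noteq> 0"
  shows "qinner x (qmap cnj x) \<noteq> 0"
proof (cases x)
  case (Qn a b c d)
  have "qinner x (qmap cnj x) = of_real ((cmod a)\<^sup>2 + (cmod b)\<^sup>2 + (cmod c)\<^sup>2 + (cmod d)\<^sup>2)"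
    by (simp only: Qn qinner.simps qmap.simps of_real_add complex_norm_square)
  moreover have "(cmod a)\<^sup>2 + (cmod b)\<^sup>2 + (cmod c)\<^sup>2 + (cmod d)\<^sup>2 \<noteq> 0"
    using assms Qn by (simp add: add_nonneg_eq_0_iff)
  ultimately show ?thesis by (metis of_real_eq_0_iff)
qed

lemma left_annihilator_eq_0:
  fixes X v Z :: "complex quaternion"
  assumes X: "qnorm X = 0" and v: "qnorm v = 0" and "X * v \<noteq> 0"
    and "Z * qcnj X = 0" and "Z * v = 0"
  shows "Z = 0"
proof -
  define Q where "Q = qcnj X + v * qcnj (qmap cnj (X * v))"
  have "Z * Q = 0" using assms by (simp add: Q_def distrib_left flip: mult.assoc)
  have "qnorm Q = 2 * qinner (X * v) (qmap cnj (X * v))"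
    by (simp add: Q_def qnorm_add qnorm_qcnj qnorm_times X v qinner_qcnj_left qre_times_qcnj
        flip: mult.assoc)
  then have "qnorm Q \<noteq> 0" using qinner_qmap_cnj_self_neq_0[OF \<open>X * v \<noteq> 0\<close>] by simp
  have "Z * qscalar (qnorm Q) = Z * Q * qcnj Q" by (simp add: mult.assoc times_qcnj_self)
  then have "qscalar (qnorm Q) * Z = 0" using \<open>Z * Q = 0\<close> by (simp add: qscalar_commute)
  with \<open>qnorm Q \<noteq> 0\<close> show ?thesis by (rule qscalar_times_eq_0)
qed

text \<open>The key computation in \<open>\<complex> \<otimes> \<bbbH>\<close>: here \<open>X\<close>, \<open>v\<close> and \<open>Y\<close> are the values at the root
  of \<open>N\<close> of the cofactor, the linear factor and the dual part.  The second alternative of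
  the hypothesis says that \<open>N\<close> divides the dual part of the norm.\<close>

lemma exists_annihilating_shift:
  fixes X Y v :: "complex quaternion"
  assumes v: "qnorm v = 0" and Xv: "X * v \<noteq> 0"
    and cond: "qnorm X \<noteq> 0 \<or> (X * v) * qcnj Y + Y * qcnj (X * v) = 0"
  obtains \<beta> where "(Y + X * \<beta>) * qcnj v = 0"
proof (cases "qnorm X = 0")
  case False
  have "X * (qscalar (1 / qnorm X) * qcnj X * Y) = qscalar (1 / qnorm X) * (X * qcnj X) * Y"
    by (simp add: mult.assoc qscalar_commute[of _ X] flip: mult.assoc)
  also have "\<dots> = Y" using False by (simp add: times_qcnj_self qscalar_times)
  finally show ?thesis by (intro that[of "- (qscalar (1 / qnorm X) * qcnj X * Y)"]) simp
next
  case True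
  with cond have "(X * v) * qcnj Y + Y * qcnj (X * v) = 0" by simp
  then have Yv: "Y * (qcnj v * qcnj X) = - (X * (v * qcnj Y))"
    by (simp add: qcnj_times mult.assoc eq_neg_iff_add_eq_0 add.commute)
  define Z where "Z = qcnj X * Y * qcnj v"
  have "Z * qcnj X = - ((qcnj X * X) * (v * qcnj Y))" by (simp add: Z_def Yv mult.assoc)
  then have "Z * qcnj X = 0" by (simp add: qcnj_times_self True)
  moreover have "Z * v = 0" by (simp add: Z_def mult.assoc qcnj_times_self v)
  ultimately have "Z = 0" using left_annihilator_eq_0[OF True v Xv] by blast
  have "X \<noteq> 0" using Xv by auto
  define W where "W = qscalar (1 / (2 * qinner X (qmap cnj X))) * qmap cnj X"
  have "2 * qinner X W = 1"
    using qinner_qmap_cnj_self_neq_0[OF \<open>X \<noteq> 0\<close>] by (simp add: W_def qinner_qscalar_times)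
  then have XW: "X * qcnj W = 1 - W * qcnj X"
    using polarization[of X W] by (simp add: eq_diff_eq)
  have "(Y - X * (qcnj W * Y)) * qcnj v = Y * qcnj v - (X * qcnj W) * Y * qcnj v"
    by (simp add: algebra_simps mult.assoc)
  also have "\<dots> = W * Z" by (simp add: XW Z_def algebra_simps mult.assoc)
  finally show ?thesis using \<open>Z = 0\<close> by (intro that[of "- (qcnj W * Y)"]) simp
qed

text \<open>The hypothesis \<open>cond\<close> says that \<open>N\<close> does not divide the norm of \<open>P'\<close>, or that it
  divides the dual part of the norm of \<open>P + \<epsilon> D\<close>.\<close>

lemma dual_part_right_divisible:
  assumes root: "\<And>f. ceval l f = 0 \<longleftrightarrow> N dvd f" and "Im l \<noteq> 0" and "N \<noteq> 0"
    and L: "qnorm (qvar - qconst p) = N"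
    and P: "P = P' * (qvar - qconst p)" and "qeval l P \<noteq> 0"
    and cond: "qnorm (qeval l P') \<noteq> 0 \<or> ceval l (qinner P D) = 0"
  obtains b D' where "D = P' * (- qconst b) + D' * (qvar - qconst p)"
proof -
  define X v Y where "X = qeval l P'" and "v = qeval l (qvar - qconst p)" and "Y = qeval l D"
  have LL: "(qvar - qconst p) * qcnj (qvar - qconst p) = qscalar N"
    using L by (simp add: times_qcnj_self)
  have Nl: "ceval l N = 0" using root by simp
  have "v * qcnj v = 0"
    by (simp add: v_def LL Nl qeval_qscalar flip: qeval_qcnj qeval_times)
  then have v0: "qnorm v = 0" by (simp add: times_qcnj_self)
  have Xv: "X * v = qeval l P" by (simp add: X_def v_def P qeval_times)
  have "(X * v) * qcnj Y + Y * qcnj (X * v) = qscalar (2 * ceval l (qinner P D))"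
    by (simp add: Xv Y_def polarization qinner_qeval)
  with cond have "qnorm X \<noteq> 0 \<or> (X * v) * qcnj Y + Y * qcnj (X * v) = 0"
    by (auto simp: X_def)
  then obtain \<beta> where \<beta>: "(Y + X * \<beta>) * qcnj v = 0"
    using exists_annihilating_shift[OF v0] Xv \<open>qeval l P \<noteq> 0\<close> by metis
  obtain B0 B1 where B: "\<beta> = qmap of_real B0 + qscalar l * qmap of_real B1"
    using quaternion_real_coordinates[OF \<open>Im l \<noteq> 0\<close>] .
  define b where "b = B1 * p + B0"
  have "v = qscalar l - qmap of_real p" by (simp add: v_def qeval_diff qeval_qvar qeval_qconst)
  then have \<beta>v: "\<beta> = qmap of_real B1 * v + qmap of_real b"
    by (simp add: B b_def qmap_of_real_add qmap_of_real_times right_diff_distrib qscalar_commute)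
  have "(Y + X * qmap of_real b) * qcnj v = (Y + X * \<beta>) * qcnj v - X * qmap of_real B1 * (v * qcnj v)"
    by (simp add: \<beta>v algebra_simps mult.assoc)
  also have "\<dots> = 0" using \<beta> by (simp add: times_qcnj_self v0)
  finally have "qeval l (D + P' * qconst b) * qeval l (qcnj (qvar - qconst p)) = 0"
    by (simp add: qeval_add qeval_times qeval_qconst qeval_qcnj X_def Y_def v_def)
  then obtain D' where "D + P' * qconst b = D' * (qvar - qconst p)"
    using right_divisor_if_qeval[OF root \<open>N \<noteq> 0\<close> LL] by blast
  then have "D = P' * (- qconst b) + D' * (qvar - qconst p)" by (simp add: algebra_simps)
  then show ?thesis by (rule that)
qed

section \<open>Degrees of quaternion polynomials\<close>

definition qcoeff :: "real poly quaternion \<Rightarrow> nat \<Rightarrow> real quaternion" where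
  "qcoeff X i = qmap (\<lambda>f. coeff f i) X"

definition qdegree_less :: "real poly quaternion \<Rightarrow> nat \<Rightarrow> bool" where
  "qdegree_less X n \<longleftrightarrow> (\<forall>i\<ge>n. qcoeff X i = 0)"

definition qmonic :: "real poly quaternion \<Rightarrow> nat \<Rightarrow> bool" where
  "qmonic X n \<longleftrightarrow> qdegree_less X (Suc n) \<and> qcoeff X n = 1"

lemma qcoeff_add: "qcoeff (X + Y) i = qcoeff X i + qcoeff Y i"
  by (cases X; cases Y) (simp add: qcoeff_def)

lemma qcoeff_diff: "qcoeff (X - Y) i = qcoeff X i - qcoeff Y i"
  by (cases X; cases Y) (simp add: qcoeff_def Qn_diff)

lemma qcoeff_times_qconst: "qcoeff (X * qconst b) i = qcoeff X i * b"
proof -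
  have "coeff (f * [:a:]) i = coeff f i * a" for f :: "real poly" and a
    by (simp add: mult.commute)
  then show ?thesis by (cases X; cases b) (simp add: qcoeff_def qconst_def algebra_simps)
qed

lemma qcoeff_times_qvar: "qcoeff (X * qvar) (Suc i) = qcoeff X i"
proof -
  have "coeff (f * [:0, 1:]) (Suc i) = coeff f i" for f :: "real poly"
    by (simp add: mult.commute[of f])
  then show ?thesis by (cases X) (simp add: qcoeff_def qvar_def qscalar_def)
qed

lemma qcoeff_times_linear:
  "qcoeff X (Suc i) = 0 \<Longrightarrow> qcoeff (X * (qvar - qconst p)) (Suc i) = qcoeff X i"
  by (simp add: right_diff_distrib qcoeff_diff qcoeff_times_qvar qcoeff_times_qconst)

lemma qdegree_less_exists: "\<exists>n. qdegree_less X n"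
proof (cases X)
  case (Qn a b c d)
  have "qdegree_less X (Suc (degree a + degree b + degree c + degree d))"
    by (auto simp: Qn qdegree_less_def qcoeff_def coeff_eq_0)
  then show ?thesis ..
qed

lemma qdegree_less_add: "qdegree_less X n \<Longrightarrow> qdegree_less Y n \<Longrightarrow> qdegree_less (X + Y) n"
  by (simp add: qdegree_less_def qcoeff_add)

lemma qdegree_less_times_qconst: "qdegree_less X n \<Longrightarrow> qdegree_less (X * qconst b) n"
  by (simp add: qdegree_less_def qcoeff_times_qconst)

lemma qdegree_less_times_linear:
  assumes "qdegree_less (X * (qvar - qconst p)) (Suc s)"
  shows "qdegree_less X s"
  unfolding qdegree_less_def
proof (intro allI impI)
  fix i assume "s \<le> i"
  obtain B where B: "qdegree_less X B" using qdegree_less_exists ..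
  have "i \<le> max i B" by simp
  then show "qcoeff X i = 0"
  proof (induction rule: inc_induct)
    case base
    show ?case using B by (simp add: qdegree_less_def)
  next
    case (step n)
    then have "qcoeff X n = qcoeff (X * (qvar - qconst p)) (Suc n)"
      by (simp add: qcoeff_times_linear)
    also have "\<dots> = 0" using assms \<open>s \<le> i\<close> step.hyps by (simp add: qdegree_less_def)
    finally show ?case .
  qed
qed

lemma qmonic_times_linear:
  assumes "qmonic (X * (qvar - qconst p)) (Suc d)"
  shows "qmonic X d"
proof -
  have "qdegree_less X (Suc d)"
    using assms qdegree_less_times_linear by (auto simp: qmonic_def)
  moreover from this have "qcoeff X d = qcoeff (X * (qvar - qconst p)) (Suc d)"
    by (simp add: qdegree_less_def qcoeff_times_linear)
  ultimately show ?thesis using assms by (simp add: qmonic_def)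
qed

lemma qdegree_less_0: "qdegree_less D 0 \<Longrightarrow> D = 0"
  by (cases D) (auto simp: qdegree_less_def qcoeff_def poly_eq_iff)

lemma qmonic_0: "qmonic P 0 \<Longrightarrow> P = 1"
proof (cases P)
  case (Qn a b c d)
  have const: "f = [:coeff f 0:]" if "\<forall>i\<ge>1. coeff f i = 0" for f :: "real poly"
    using that by (intro poly_eqI) (auto simp: coeff_pCons split: nat.split)
  assume "qmonic P 0"
  then have "\<forall>i\<ge>1. coeff a i = 0 \<and> coeff b i = 0 \<and> coeff c i = 0 \<and> coeff d i = 0"
    and "coeff a 0 = 1" "coeff b 0 = 0" "coeff c 0 = 0" "coeff d 0 = 0"
    by (auto simp: Qn qmonic_def qdegree_less_def qcoeff_def one_quaternion_def)
  then show ?thesis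
    using const[of a] const[of b] const[of c] const[of d]
    by (simp add: Qn one_quaternion_def one_pCons)
qed

lemma qdegree_less_dual_cofactor:
  assumes "qmonic P d" and "qdegree_less D (Suc d)"
    and "D = P * (- qconst b) + D' * (qvar - qconst p)"
  shows "qdegree_less D' d"
proof (rule qdegree_less_times_linear)
  have "qdegree_less (P * qconst b) (Suc d)"
    using \<open>qmonic P d\<close> by (intro qdegree_less_times_qconst) (simp add: qmonic_def)
  with assms(2) have "qdegree_less (D + P * qconst b) (Suc d)" by (rule qdegree_less_add)
  then show "qdegree_less (D' * (qvar - qconst p)) (Suc d)" by (simp add: assms(3))
qed

lemma coeff_mult_self_top:
  fixes f :: "'a::comm_semiring_1 poly"
  assumes "\<forall>i>k. coeff f i = 0"
  shows "coeff (f * f) (2 * k) = coeff f k * coeff f k"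
proof -
  have "coeff (f * f) (2 * k) = coeff f k * coeff f (2 * k - k)
      + (\<Sum>i\<in>{..2 * k} - {k}. coeff f i * coeff f (2 * k - i))"
    by (simp add: coeff_mult sum.remove[of _ k])
  also have "(\<Sum>i\<in>{..2 * k} - {k}. coeff f i * coeff f (2 * k - i)) = 0"
  proof (rule sum.neutral, intro ballI)
    fix i assume "i \<in> {..2 * k} - {k}"
    then have "i > k \<or> 2 * k - i > k" by auto
    then show "coeff f i * coeff f (2 * k - i) = 0" using assms by auto
  qed
  finally show ?thesis by simp
qed

lemma coeff_qnorm_qmonic: "qmonic P k \<Longrightarrow> coeff (qnorm P) (2 * k) = 1"
proof (cases P)
  case (Qn a b c d)
  assume "qmonic P k"
  then have "\<forall>i>k. coeff a i = 0 \<and> coeff b i = 0 \<and> coeff c i = 0 \<and> coeff d i = 0"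
    and "coeff a k = 1" "coeff b k = 0" "coeff c k = 0" "coeff d k = 0"
    by (auto simp: Qn qmonic_def qdegree_less_def qcoeff_def one_quaternion_def)
  then show ?thesis by (simp add: Qn coeff_mult_self_top)
qed

lemma prime_divisor_qnorm_qmonic:
  assumes "qmonic P (Suc d)"
  obtains N where "N dvd qnorm P" and "prime N"
proof -
  have "coeff (qnorm P) (2 * Suc d) \<noteq> 0" using coeff_qnorm_qmonic[OF assms] by simp
  then have "qnorm P \<noteq> 0" and "degree (qnorm P) \<noteq> 0"
    using le_degree[of "qnorm P" "2 * Suc d"] by auto
  then have "\<not> is_unit (qnorm P)" by (simp add: is_unit_iff_degree)
  then show ?thesis using prime_divisor_exists[OF \<open>qnorm P \<noteq> 0\<close>] that by blast
qed

section \<open>Products of linear factors\<close>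

text \<open>A dual quaternion polynomial \<open>P + \<epsilon> D\<close> is represented by the pair \<open>(P, D)\<close>.\<close>

fun dq_mult :: "real poly quaternion \<times> real poly quaternion \<Rightarrow> real poly quaternion \<times> real poly quaternion
    \<Rightarrow> real poly quaternion \<times> real poly quaternion" where
  "dq_mult (P, D) (P', D') = (P * P', P * D' + D * P')"

definition dq_linear :: "real quaternion \<Rightarrow> real quaternion \<Rightarrow> real poly quaternion \<times> real poly quaternion"
  where "dq_linear p b = (qvar - qconst p, - qconst b)"

fun dq_prod :: "(real quaternion \<times> real quaternion) list \<Rightarrow> real poly quaternion \<times> real poly quaternion"
  where
    "dq_prod [] = (1, 0)"
  | "dq_prod ((p, b) # hs) = dq_mult (dq_linear p b) (dq_prod hs)"

lemma dq_mult_assoc: "dq_mult (dq_mult x y) z = dq_mult x (dq_mult y z)"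
  by (cases x; cases y; cases z) (simp add: algebra_simps mult.assoc)

lemma dq_prod_snoc: "dq_prod (hs @ [(p, b)]) = dq_mult (dq_prod hs) (dq_linear p b)"
proof (induction hs)
  case Nil
  show ?case by (cases "dq_linear p b") simp
next
  case (Cons h hs)
  then show ?case by (cases h) (simp add: dq_mult_assoc)
qed

lemma prime_power_dvd_dual_step_iff:
  fixes q N a s r :: "'a::factorial_semiring_gcd"
  assumes q: "prime_elem q" and N: "\<not> q * q dvd N"
  shows "(\<forall>k. q ^ Suc k dvd a * N \<longrightarrow> q ^ k dvd s * N + a * r)
     \<longleftrightarrow> (\<forall>k. q ^ Suc k dvd a \<longrightarrow> q ^ k dvd s)" (is "?lhs \<longleftrightarrow> ?rhs")
proof (cases "q dvd N")
  case True
  then obtain c where c: "N = q * c" ..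
  have "coprime (q ^ k) c" for k
    using c N q by (metis coprime_commute mult_dvd_mono dvd_refl prime_elem_imp_power_coprime)
  then have cancel: "q ^ Suc k dvd x * N \<longleftrightarrow> q ^ k dvd x" for k x
    using q by (simp add: c coprime_dvd_mult_left_iff mult.left_commute[of x])
  show ?thesis
  proof
    assume L: ?lhs
    show ?rhs
    proof (intro allI impI)
      fix k assume "q ^ Suc k dvd a"
      then have "q ^ Suc (Suc k) dvd a * N" using cancel by blast
      then have "q ^ Suc k dvd s * N + a * r" using L by blast
      moreover have "q ^ Suc k dvd a * r" using \<open>q ^ Suc k dvd a\<close> by simp
      ultimately show "q ^ k dvd s"
        using cancel by (metis dvd_add_left_iff)
    qed
  next
    assume R: ?rhs
    show ?lhs
    proof (intro allI impI)
      fix k assume "q ^ Suc k dvd a * N"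
      then have a: "q ^ k dvd a" using cancel by blast
      show "q ^ k dvd s * N + a * r"
      proof (cases k)
        case (Suc j)
        then show ?thesis using R a cancel[of j s] by auto
      qed simp
    qed
  qed
next
  case False
  then have cancel: "q ^ k dvd x * N \<longleftrightarrow> q ^ k dvd x" for k x
    using q prime_elem_imp_power_coprime[OF q False]
    by (simp add: coprime_dvd_mult_left_iff coprime_commute)
  have pow: "q ^ Suc k dvd x \<Longrightarrow> q ^ k dvd x" for k x
    by (metis dvd_mult_left power_Suc mult.commute)
  show ?thesis
  proof (intro iffI allI impI)
    fix k assume L: ?lhs and a: "q ^ Suc k dvd a"
    then have "q ^ Suc k dvd a * N" using cancel[of "Suc k" a] by blast
    then have "q ^ k dvd s * N + a * r" "q ^ k dvd a * r" using L pow[OF a] by auto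
    then show "q ^ k dvd s" using cancel by (metis dvd_add_left_iff)
  next
    fix k assume R: ?rhs and "q ^ Suc k dvd a * N"
    then have a: "q ^ Suc k dvd a" using cancel[of "Suc k" a] by blast
    then have "q ^ k dvd s" "q ^ k dvd a" using R pow[OF a] by blast+
    then show "q ^ k dvd s * N + a * r" by simp
  qed
qed

text \<open>The divisibility condition of the theorem, phrased prime by prime so that it is
  inherited by the factors of a product.\<close>

definition dual_norm_condition :: "real poly quaternion \<Rightarrow> real poly quaternion \<Rightarrow> bool" where
  "dual_norm_condition P D \<longleftrightarrow>
     (\<forall>q k. prime_elem q \<longrightarrow> 2 \<le> degree q \<longrightarrow> q ^ Suc k dvd qnorm P \<longrightarrow> q ^ k dvd qinner P D)"

lemma dual_norm_condition_times_linear: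
  "dual_norm_condition (P * (qvar - qconst p)) (P * c + D * (qvar - qconst p))
     \<longleftrightarrow> dual_norm_condition P D"
proof -
  define N where "N = qnorm (qvar - qconst p)"
  have N: "N \<noteq> 0" "degree N = 2" by (simp_all add: N_def qnorm_linear)
  have "\<not> q * q dvd N" if "2 \<le> degree q" for q :: "real poly"
  proof
    assume "q * q dvd N"
    then have "degree (q * q) \<le> 2" using dvd_imp_degree_le[OF _ \<open>N \<noteq> 0\<close>] N by simp
    moreover have "q \<noteq> 0" using that by auto
    ultimately show False using that by (simp add: degree_mult_eq)
  qed
  then have "(\<forall>k. q ^ Suc k dvd qnorm P * N
        \<longrightarrow> q ^ k dvd qinner P D * N + qnorm P * qinner (qvar - qconst p) c)
      \<longleftrightarrow> (\<forall>k. q ^ Suc k dvd qnorm P \<longrightarrow> q ^ k dvd qinner P D)"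
    if "prime_elem q" "2 \<le> degree q" for q
    using prime_power_dvd_dual_step_iff that by blast
  then show ?thesis
    unfolding dual_norm_condition_def qnorm_times qinner_times_dual N_def by blast
qed

lemma dual_norm_condition_dq_prod: "(P, D) = dq_prod hs \<Longrightarrow> dual_norm_condition P D"
proof (induction hs arbitrary: P D rule: rev_induct)
  case Nil
  then show ?case by (simp add: dual_norm_condition_def zero_quaternion_def one_quaternion_def)
next
  case (snoc h hs)
  obtain p b where h: "h = (p, b)" by (cases h)
  obtain P' D' where hs: "dq_prod hs = (P', D')" by (cases "dq_prod hs")
  have "dual_norm_condition P' D'" using snoc.IH hs by simp
  then show ?case
    using snoc.prems dual_norm_condition_times_linear[of P' p "- qconst b" D']
    by (simp add: h hs dq_prod_snoc dq_linear_def)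
qed

lemma lead_coeff_prime_poly:
  fixes N :: "real poly"
  assumes "prime N"
  shows "lead_coeff N = 1"
proof -
  have "N \<noteq> 0" using assms by auto
  have "lead_coeff N = coeff (normalize N) (degree N)"
    using assms by (simp add: prime_def)
  also have "\<dots> = 1" using \<open>N \<noteq> 0\<close> by simp
  finally show ?thesis .
qed

lemma split_right_linear_factor:
  fixes N :: "real poly"
  assumes irr: "irreducible N" and deg: "degree N = 2" and monic: "lead_coeff N = 1"
    and "N dvd qnorm P" and "\<not> qscalar_dvd N P"
    and dual: "N * N dvd qnorm P \<Longrightarrow> N dvd qinner P D"
  obtains p b P' D' where "P = P' * (qvar - qconst p)"
    and "D = P' * (- qconst b) + D' * (qvar - qconst p)"
    and "qnorm (qvar - qconst p) = N"
proof -
  obtain l where "Im l \<noteq> 0" and root: "\<And>f. ceval l f = 0 \<longleftrightarrow> N dvd f"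
    using irreducible_quadratic_root[OF irr deg monic] by blast
  obtain p P' where P: "P = P' * (qvar - qconst p)" and L: "qnorm (qvar - qconst p) = N"
    using niven_linear_right_factor[OF root \<open>Im l \<noteq> 0\<close> monic_quadratic_eq[OF deg monic]]
      \<open>N dvd qnorm P\<close> \<open>\<not> qscalar_dvd N P\<close> by blast
  have "qeval l P \<noteq> 0" using qscalar_dvd_if_qeval_eq_0[OF root] \<open>\<not> qscalar_dvd N P\<close> by blast
  moreover have "qnorm (qeval l P') \<noteq> 0 \<or> ceval l (qinner P D) = 0"
  proof (rule disjCI)
    assume "ceval l (qinner P D) \<noteq> 0"
    then have "\<not> N * N dvd qnorm P' * N" using dual root P L by (auto simp: qnorm_times)
    then have "\<not> N dvd qnorm P'" by (meson dvd_refl mult_dvd_mono)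
    then show "qnorm (qeval l P') \<noteq> 0" using root by (simp add: qnorm_qeval)
  qed
  moreover have "N \<noteq> 0" using deg by auto
  ultimately obtain b D' where "D = P' * (- qconst b) + D' * (qvar - qconst p)"
    using dual_part_right_divisible[OF root \<open>Im l \<noteq> 0\<close> _ L P] by blast
  with P L show ?thesis using that by blast
qed

lemma dq_prod_if_dual_norm_condition:
  assumes "qmonic P d" and "qdegree_less D d"
    and "\<forall>c. qscalar_dvd c P \<longrightarrow> degree c = 0"
    and "\<forall>q. prime_elem q \<longrightarrow> q dvd qnorm P \<longrightarrow> degree q = 2"
    and "dual_norm_condition P D"
  shows "\<exists>hs. (P, D) = dq_prod hs"
  using assms
proof (induction d arbitrary: P D)
  case 0
  then have "P = 1" "D = 0" using qmonic_0 qdegree_less_0 by auto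
  then show ?case by (intro exI[of _ "[]"]) simp
next
  case (Suc d)
  obtain N where "N dvd qnorm P" and "prime N"
    using prime_divisor_qnorm_qmonic[OF Suc.prems(1)] by blast
  then have "prime_elem N" by simp
  then have irr: "irreducible N" and deg: "degree N = 2"
    using Suc.prems(4) \<open>N dvd qnorm P\<close> by (auto intro: prime_elem_imp_irreducible)
  have monic: "lead_coeff N = 1" using \<open>prime N\<close> by (rule lead_coeff_prime_poly)
  have "\<not> qscalar_dvd N P"
  proof
    assume "qscalar_dvd N P"
    then have "degree N = 0" using Suc.prems(3) by blast
    with deg show False by simp
  qed
  have "2 \<le> degree N" using deg by simp
  then have "N ^ Suc 1 dvd qnorm P \<longrightarrow> N ^ 1 dvd qinner P D"
    using Suc.prems(5) \<open>prime_elem N\<close> unfolding dual_norm_condition_def by blast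
  then have dual: "N * N dvd qnorm P \<Longrightarrow> N dvd qinner P D" by simp
  obtain p b P' D' where P: "P = P' * (qvar - qconst p)"
    and D: "D = P' * (- qconst b) + D' * (qvar - qconst p)" and L: "qnorm (qvar - qconst p) = N"
    by (rule split_right_linear_factor[OF irr deg monic \<open>N dvd qnorm P\<close> \<open>\<not> qscalar_dvd N P\<close> dual])
  have "qmonic P' d" using qmonic_times_linear Suc.prems(1) P by simp
  moreover have "qdegree_less D' d"
    using \<open>qmonic P' d\<close> Suc.prems(2) D by (rule qdegree_less_dual_cofactor)
  moreover have "\<forall>c. qscalar_dvd c P' \<longrightarrow> degree c = 0"
    using Suc.prems(3) by (auto simp: P dest: qscalar_dvd_times_right)
  moreover have "\<forall>q. prime_elem q \<longrightarrow> q dvd qnorm P' \<longrightarrow> degree q = 2"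
    using Suc.prems(4) unfolding P qnorm_times by (blast intro: dvd_mult2)
  moreover have "dual_norm_condition P' D'"
    using Suc.prems(5) unfolding P D by (simp only: dual_norm_condition_times_linear)
  ultimately have "\<exists>hs. (P', D') = dq_prod hs" by (rule Suc.IH)
  then obtain hs where "(P', D') = dq_prod hs" ..
  then have "(P, D) = dq_prod (hs @ [(p, b)])"
    by (simp add: dq_prod_snoc dq_linear_def P D flip: \<open>(P', D') = dq_prod hs\<close>)
  then show ?case ..
qed

section \<open>Products of powers of pairwise coprime primes\<close>

lemma pairwise_coprime_prod_dvd:
  fixes f :: "nat \<Rightarrow> 'a::semiring_gcd"
  assumes "\<forall>i<m. \<forall>j<m. i \<noteq> j \<longrightarrow> coprime (f i) (f j)" and "\<forall>i<m. f i dvd x"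
  shows "(\<Prod>i<m. f i) dvd x"
  using assms
proof (induction m)
  case (Suc m)
  have "coprime (\<Prod>i<m. f i) (f m)"
    using Suc.prems(1) by (intro prod_coprime_left) auto
  with Suc show ?case by (simp add: divides_mult)
qed simp

lemma prod_powers_dvd_iff:
  fixes N :: "nat \<Rightarrow> 'a::factorial_semiring_gcd"
  assumes prime: "\<forall>i<m. prime_elem (N i)"
    and coprime: "\<forall>i<m. \<forall>j<m. i \<noteq> j \<longrightarrow> coprime (N i) (N j)"
  shows "(\<Prod>i<m. N i ^ (n i - 1)) dvd s
     \<longleftrightarrow> (\<forall>q k. prime_elem q \<longrightarrow> q ^ Suc k dvd (\<Prod>i<m. N i ^ n i) \<longrightarrow> q ^ k dvd s)"
proof
  assume Q: "(\<Prod>i<m. N i ^ (n i - 1)) dvd s"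
  show "\<forall>q k. prime_elem q \<longrightarrow> q ^ Suc k dvd (\<Prod>i<m. N i ^ n i) \<longrightarrow> q ^ k dvd s"
  proof (intro allI impI)
    fix q k assume q: "prime_elem q" and qk: "q ^ Suc k dvd (\<Prod>i<m. N i ^ n i)"
    have N0: "0 \<notin> N ` {..<m}" using prime by auto
    have mult: "multiplicity q (\<Prod>i<m. N i ^ n i) = (\<Sum>i<m. n i * multiplicity q (N i))"
      using q N0 by (simp add: prime_elem_multiplicity_prod_distrib prime_elem_multiplicity_power_distrib
          image_iff)
    have "(\<Prod>i<m. N i ^ n i) \<noteq> 0" using N0 by (auto simp: prod_zero_iff)
    then have k: "Suc k \<le> multiplicity q (\<Prod>i<m. N i ^ n i)"
      using qk power_dvd_iff_le_multiplicity[OF _ prime_elem_not_unit[OF q]] by blast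
    then have "(\<Sum>i<m. n i * multiplicity q (N i)) \<noteq> 0" unfolding mult by linarith
    then obtain i where "i < m" "n i * multiplicity q (N i) \<noteq> 0"
      by (metis (mono_tags) sum.neutral lessThan_iff)
    then have i: "i < m" "multiplicity q (N i) > 0" by simp_all
    then have qN: "q dvd N i" using not_dvd_imp_multiplicity_0 by force
    then obtain c where c: "N i = q * c" ..
    have "is_unit c"
      using irreducibleD[OF prime_elem_imp_irreducible c] prime i(1) q
      by (auto simp: prime_elem_not_unit)
    then have "multiplicity q (N i) = 1"
      using q c by (simp add: multiplicity_times_unit_right mult.commute[of q] multiplicity_self)
    moreover have "multiplicity q (N j) = 0" if "j < m" "j \<noteq> i" for j
    proof -
      have "\<not> q dvd N j"
        using coprime_common_divisor[of "N i" "N j" q] coprime i(1) that qN q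
        by (auto simp: prime_elem_not_unit)
      then show ?thesis by (rule not_dvd_imp_multiplicity_0)
    qed
    ultimately have "(\<Sum>i<m. n i * multiplicity q (N i)) = n i"
      using i(1) by (subst sum.remove[of _ i]) auto
    with k mult have "k \<le> n i - 1" by simp
    then have "q ^ k dvd N i ^ (n i - 1)"
      by (rule dvd_trans[OF le_imp_power_dvd dvd_power_same[OF qN]])
    also have "\<dots> dvd (\<Prod>i<m. N i ^ (n i - 1))" using i(1) by (intro dvd_prodI) auto
    finally show "q ^ k dvd s" using Q by (rule dvd_trans)
  qed
next
  assume R: "\<forall>q k. prime_elem q \<longrightarrow> q ^ Suc k dvd (\<Prod>i<m. N i ^ n i) \<longrightarrow> q ^ k dvd s"
  have "N i ^ (n i - 1) dvd s" if "i < m" for i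
  proof (cases "n i")
    case (Suc j)
    have "N i ^ n i dvd (\<Prod>i<m. N i ^ n i)" using that by (intro dvd_prodI) auto
    then show ?thesis using R prime that Suc by auto
  qed simp
  then show "(\<Prod>i<m. N i ^ (n i - 1)) dvd s"
    using coprime by (intro pairwise_coprime_prod_dvd) auto
qed

lemma prime_dvd_prod_powers_degree:
  fixes N :: "nat \<Rightarrow> real poly"
  assumes irr: "\<forall>i<m. irreducible (N i)" and deg: "\<forall>i<m. degree (N i) = 2"
    and "prime_elem q" and "q dvd (\<Prod>i<m. N i ^ n i)"
  shows "degree q = 2"
proof -
  have "prime (normalize q)" using \<open>prime_elem q\<close> by simp
  then have "\<exists>i\<in>{..<m}. normalize q dvd N i ^ n i"
    using \<open>q dvd (\<Prod>i<m. N i ^ n i)\<close> prime_dvd_prod_iff[of "{..<m}" "normalize q"] by simp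
  then obtain i where "i < m" and "q dvd N i ^ n i" by auto
  then have "q dvd N i" using \<open>prime_elem q\<close> by (auto dest: prime_elem_dvd_power)
  then obtain c where c: "N i = q * c" ..
  have "is_unit c"
    using irreducibleD[of "N i" q c] irr \<open>i < m\<close> c \<open>prime_elem q\<close> by (auto simp: prime_elem_not_unit)
  then have "c \<noteq> 0" by auto
  with \<open>is_unit c\<close> have "degree c = 0" by (simp add: is_unit_iff_degree)
  moreover have "q \<noteq> 0" using \<open>prime_elem q\<close> by auto
  ultimately have "degree (N i) = degree q" using c \<open>c \<noteq> 0\<close> by (simp add: degree_mult_eq)
  then show ?thesis using deg \<open>i < m\<close> by simp
qed

lemma dual_norm_condition_iff_dvd:
  fixes N :: "nat \<Rightarrow> real poly"
  assumes irr: "\<forall>i<m. irreducible (N i)" and deg: "\<forall>i<m. degree (N i) = 2"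
    and coprime: "\<forall>i<m. \<forall>j<m. i \<noteq> j \<longrightarrow> coprime (N i) (N j)"
    and norm: "qnorm P = (\<Prod>i<m. N i ^ n i)"
  shows "dual_norm_condition P D \<longleftrightarrow> (\<Prod>i<m. N i ^ (n i - 1)) dvd qinner P D"
proof -
  have "2 \<le> degree q" if "prime_elem q" and "q ^ Suc k dvd (\<Prod>i<m. N i ^ n i)" for q k
  proof -
    have "q dvd q ^ Suc k" by simp
    then have "q dvd (\<Prod>i<m. N i ^ n i)" using that(2) by (rule dvd_trans)
    then show ?thesis using prime_dvd_prod_powers_degree[OF irr deg \<open>prime_elem q\<close>] by simp
  qed
  moreover have "\<forall>i<m. prime_elem (N i)" using irr by (simp add: irreducible_imp_prime_elem)
  then have "(\<Prod>i<m. N i ^ (n i - 1)) dvd qinner P D \<longleftrightarrow>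
      (\<forall>q k. prime_elem q \<longrightarrow> q ^ Suc k dvd (\<Prod>i<m. N i ^ n i) \<longrightarrow> q ^ k dvd qinner P D)"
    using coprime by (rule prod_powers_dvd_iff)
  ultimately show ?thesis unfolding dual_norm_condition_def norm by blast
qed

section \<open>Translation to dual quaternion polynomials\<close>

fun quat_of :: "quat \<Rightarrow> real quaternion" where
  "quat_of (Quat a b c d) = Qn a b c d"

fun of_quaternion :: "real quaternion \<Rightarrow> quat" where
  "of_quaternion (Qn a b c d) = Quat a b c d"

fun dquat_pair :: "dquat \<Rightarrow> real quaternion \<times> real quaternion" where
  "dquat_pair (DQuat a b) = (quat_of a, quat_of b)"

fun dhp_of_pair :: "real poly quaternion \<times> real poly quaternion \<Rightarrow> dhpoly" where
  "dhp_of_pair (P, D) = DHP (quat_hp P) (quat_hp D)"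

lemma DHP_eq_dhp_of_pair_iff: "DHP P D = dhp_of_pair x \<longleftrightarrow> (hp_quat P, hp_quat D) = x"
  by (cases x) (auto simp flip: hp_quat_inject)

lemma dhp_mult_dhp_of_pair: "dhp_mult (dhp_of_pair x) (dhp_of_pair y) = dhp_of_pair (dq_mult x y)"
proof -
  have "quat_hp (A * B) = hp_mult (quat_hp A) (quat_hp B)" for A B
    by (simp flip: hp_quat_inject add: hp_quat_mult)
  moreover have "quat_hp (A + B) = hp_add (quat_hp A) (quat_hp B)" for A B
    by (simp flip: hp_quat_inject add: hp_quat_add)
  ultimately show ?thesis by (cases x; cases y) simp
qed

lemma lin_factor_eq: "lin_factor h = dhp_of_pair (case dquat_pair h of (p, b) \<Rightarrow> dq_linear p b)"
  by (cases h rule: lin_factor.cases)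
    (simp add: dq_linear_def qvar_def qconst_def qscalar_def Qn_diff diff_pCons)

lemma lin_prod_eq: "lin_prod hs = dhp_of_pair (dq_prod (map dquat_pair hs))"
proof (induction hs)
  case Nil
  show ?case
    by (simp add: lin_prod_def dhp_one_def hp_one_def hp_zero_def zero_quaternion_def one_quaternion_def)
next
  case (Cons h hs)
  then show ?case
    by (cases "dquat_pair h") (simp add: lin_prod_def lin_factor_eq dhp_mult_dhp_of_pair)
qed

lemma lin_prod_iff_dq_prod:
  "(\<exists>hs. DHP P D = lin_prod hs) \<longleftrightarrow> (\<exists>hs. (hp_quat P, hp_quat D) = dq_prod hs)"
proof
  assume "\<exists>hs. DHP P D = lin_prod hs"
  then show "\<exists>hs. (hp_quat P, hp_quat D) = dq_prod hs"
    by (auto simp: lin_prod_eq DHP_eq_dhp_of_pair_iff)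
next
  assume "\<exists>hs. (hp_quat P, hp_quat D) = dq_prod hs"
  then obtain hs where hs: "(hp_quat P, hp_quat D) = dq_prod hs" ..
  have "map dquat_pair (map (\<lambda>(p, b). DQuat (of_quaternion p) (of_quaternion b)) hs) = hs"
  proof (induction hs)
    case (Cons h hs)
    obtain p b where "h = (p, b)" by (cases h)
    with Cons show ?case by (cases p; cases b) simp
  qed simp
  then have "DHP P D = lin_prod (map (\<lambda>(p, b). DQuat (of_quaternion p) (of_quaternion b)) hs)"
    by (simp add: lin_prod_eq DHP_eq_dhp_of_pair_iff hs)
  then show "\<exists>hs. DHP P D = lin_prod hs" ..
qed

lemma dhp_monic_imp_qmonic:
  assumes "dhp_monic (DHP P D)"
  shows "qmonic (hp_quat P) (dhp_degree (DHP P D)) \<and> qdegree_less (hp_quat D) (dhp_degree (DHP P D))"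
proof -
  obtain p0 p1 p2 p3 where P: "P = HP p0 p1 p2 p3" by (cases P)
  obtain d0 d1 d2 d3 where D: "D = HP d0 d1 d2 d3" by (cases D)
  define n where "n = dhp_degree (DHP P D)"
  define S where "S = {degree p0, degree p1, degree p2, degree p3,
    degree d0, degree d1, degree d2, degree d3}"
  have "n = Max S" by (simp only: n_def S_def P D dhp_degree.simps)
  moreover have "finite S" by (simp add: S_def)
  ultimately have le: "d \<le> n" if "d \<in> S" for d using that by simp
  have "degree p0 \<le> n" "degree p1 \<le> n" "degree p2 \<le> n" "degree p3 \<le> n"
    "degree d0 \<le> n" "degree d1 \<le> n" "degree d2 \<le> n" "degree d3 \<le> n"
    by (rule le, simp add: S_def)+
  then have high: "qcoeff (hp_quat P) i = 0" "qcoeff (hp_quat D) i = 0" if "n < i" for i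
    using that by (simp_all add: P D qcoeff_def coeff_eq_0)
  have "dhp_coeff (DHP P D) n = DQuat (Quat 1 0 0 0) (Quat 0 0 0 0)"
    using assms by (simp only: dhp_monic_def n_def)
  then have "qcoeff (hp_quat P) n = 1" "qcoeff (hp_quat D) n = 0"
    by (simp_all add: P D qcoeff_def one_quaternion_def)
  with high have "qmonic (hp_quat P) n \<and> qdegree_less (hp_quat D) n"
    unfolding qmonic_def qdegree_less_def by (auto simp: Suc_le_eq le_less)
  then show ?thesis by (simp only: n_def)
qed

lemma mrpf_one_imp_no_real_factor:
  assumes "mrpf_one P"
  shows "\<forall>c. qscalar_dvd c (hp_quat P) \<longrightarrow> degree c = 0"
proof (intro allI impI)
  fix c assume "qscalar_dvd c (hp_quat P)"
  then obtain S where "hp_quat P = qscalar c * S" by (auto simp: qscalar_dvd_def)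
  then have "P = hp_scale c (quat_hp S)" by (simp flip: hp_quat_inject add: hp_quat_scale)
  with assms show "degree c = 0" by (auto simp: mrpf_one_def)
qed

lemma hp_norm_eq_of_real_iff:
  "hp_mult P (hp_cnj P) = hp_of_real a \<longleftrightarrow> qnorm (hp_quat P) = a"
  by (simp flip: hp_quat_inject add: hp_quat_mult hp_quat_cnj hp_quat_of_real times_qcnj_self)

lemma hp_dual_norm_dvd_iff:
  fixes Q :: "real poly"
  shows "(\<exists>r. hp_add (hp_mult P (hp_cnj D)) (hp_mult D (hp_cnj P)) = hp_of_real (Q * r))
     \<longleftrightarrow> Q dvd qinner (hp_quat P) (hp_quat D)"
proof -
  have "is_unit (2 :: real poly)" by (simp add: is_unit_iff_degree)
  have "(\<exists>r. hp_add (hp_mult P (hp_cnj D)) (hp_mult D (hp_cnj P)) = hp_of_real (Q * r))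
      \<longleftrightarrow> (\<exists>r. 2 * qinner (hp_quat P) (hp_quat D) = Q * r)"
    by (simp flip: hp_quat_inject add: hp_quat_add hp_quat_mult hp_quat_cnj hp_quat_of_real
        polarization)
  also have "\<dots> \<longleftrightarrow> Q dvd 2 * qinner (hp_quat P) (hp_quat D)" by (auto simp: dvd_def)
  also have "\<dots> \<longleftrightarrow> Q dvd qinner (hp_quat P) (hp_quat D)"
    using \<open>is_unit 2\<close> by (simp add: dvd_mult_unit_iff')
  finally show ?thesis .
qed

lemma dhp_norm_dvd_iff:
  fixes Q :: "real poly"
  assumes "Q dvd qnorm (hp_quat P)"
  shows "(\<exists>a b. dhp_mult (DHP P D) (dhp_cnj (DHP P D)) = dhp_of_dual (Q * a) (Q * b))
     \<longleftrightarrow> (\<exists>r. hp_add (hp_mult P (hp_cnj D)) (hp_mult D (hp_cnj P)) = hp_of_real (Q * r))"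
  using assms by (auto simp: dhp_of_dual_def hp_norm_eq_of_real_iff elim!: dvdE)

theorem theorem1:
  fixes P D :: hpoly and m :: nat and N :: "nat \<Rightarrow> real poly" and n :: "nat \<Rightarrow> nat"
  assumes monic: "dhp_monic (DHP P D)"
    and mrpf: "mrpf_one P"
    and N_irr: "\<forall>i<m. irreducible (N i)"
    and N_monic: "\<forall>i<m. lead_coeff (N i) = 1"
    and N_deg: "\<forall>i<m. degree (N i) = 2"
    and N_coprime: "\<forall>i<m. \<forall>j<m. i \<noteq> j \<longrightarrow> coprime (N i) (N j)"
    and n_pos: "\<forall>i<m. n i > 0"
    and norm_fac: "hp_mult P (hp_cnj P) = hp_of_real (\<Prod>i<m. N i ^ n i)"
  shows "((\<exists>hs. DHP P D = lin_prod hs) \<longleftrightarrow>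
            (\<exists>a b. dhp_mult (DHP P D) (dhp_cnj (DHP P D))
                     = dhp_of_dual ((\<Prod>i<m. N i ^ (n i - 1)) * a) ((\<Prod>i<m. N i ^ (n i - 1)) * b)))
       \<and> ((\<exists>hs. DHP P D = lin_prod hs) \<longleftrightarrow>
            (\<exists>r. hp_add (hp_mult P (hp_cnj D)) (hp_mult D (hp_cnj P))
                   = hp_of_real ((\<Prod>i<m. N i ^ (n i - 1)) * r)))"
proof -
  define Q where "Q = (\<Prod>i<m. N i ^ (n i - 1))"
  have norm: "qnorm (hp_quat P) = (\<Prod>i<m. N i ^ n i)"
    using norm_fac by (simp add: hp_norm_eq_of_real_iff)
  have "Q dvd qnorm (hp_quat P)"
    unfolding Q_def norm by (intro prod_dvd_prod) (simp add: le_imp_power_dvd)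
  then have dual_iff: "(\<exists>a b. dhp_mult (DHP P D) (dhp_cnj (DHP P D)) = dhp_of_dual (Q * a) (Q * b))
      \<longleftrightarrow> Q dvd qinner (hp_quat P) (hp_quat D)"
    by (rule trans[OF dhp_norm_dvd_iff hp_dual_norm_dvd_iff])
  have "\<forall>q. prime_elem q \<longrightarrow> q dvd qnorm (hp_quat P) \<longrightarrow> degree q = 2"
    using prime_dvd_prod_powers_degree[OF N_irr N_deg] by (simp add: norm)
  then have "dual_norm_condition (hp_quat P) (hp_quat D) \<Longrightarrow> \<exists>hs. (hp_quat P, hp_quat D) = dq_prod hs"
    using dhp_monic_imp_qmonic[OF monic] mrpf_one_imp_no_real_factor[OF mrpf]
    by (blast intro: dq_prod_if_dual_norm_condition)
  then have "(\<exists>hs. DHP P D = lin_prod hs) \<longleftrightarrow> dual_norm_condition (hp_quat P) (hp_quat D)"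
    unfolding lin_prod_iff_dq_prod using dual_norm_condition_dq_prod by blast
  also have "\<dots> \<longleftrightarrow> Q dvd qinner (hp_quat P) (hp_quat D)"
    unfolding Q_def using N_irr N_deg N_coprime norm by (rule dual_norm_condition_iff_dvd)
  finally have "(\<exists>hs. DHP P D = lin_prod hs) \<longleftrightarrow> Q dvd qinner (hp_quat P) (hp_quat D)" .
  then show ?thesis by (simp only: Q_def[symmetric] dual_iff hp_dual_norm_dvd_iff)
qed

end
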